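(* Let $\{X_t\}$ satisfy Assumption CEV, and let $\alpha>0$ and $\kappa_j$ be the tail index of $X_0$ and the conditional scaling exponents (so $\mathbb P(X_0>x)$ is regularly varying with index $-\alpha$ and $b_j$ is regularly varying with index $\kappa_j$). Fix $h\ge1$ and assume $$\int_{[0,\infty]^{h+1}}\mathbf 1\{y_0y_h>1\}\,\nu_h(\mathrm d\boldsymbol y)<\infty$$ (integral over the points of $(0,\infty]\times[0,\infty]^h$ with $y_0y_h>1$), and that there exists $\delta>0$ such that $$\lim_{\epsilon\to0}\limsup_{x\to\infty}\frac{\mathbb E\Big[\Big|\frac{X_0}{x}\mathbf 1\{X_0\le\epsilon x\}\frac{X_h}{b_h(x)}\Big|^\delta\Big]}{\mathbb P(X_0>x)}=0.$$ Then for every $u>0$, $$\lim_{x\to\infty}\frac{\mathbb P(X_0X_h>x\,b_h(x)\,u)}{\mathbb P(X_0>x)}=u^{-\alpha/(1+\kappa_h)}\int_{[0,\infty]^{h+1}}\mathbf 1\{y_0y_h>1\}\,\nu_h(\mathrm d\boldsymbol y).$$ In particular the right tail index of $X_0X_h$ is $\alpha/(1+\kappa_h)$.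
   Context: Assumption CEV: $\{X_t\}_{t\in\mathbb Z}$ is a real-valued time series (not necessarily stationary). There exist positive scaling functions $b_j$, $j\ge1$, and, for each $h\ge1$, a nonzero Radon measure $\nu_h$ on $(0,\infty]\times[-\infty,\infty]^h$ such that $$\frac{1}{\mathbb P(X_0>x)}\,\mathbb P\Big(\Big(\frac{X_0}{x},\frac{X_1}{b_1(x)},\dots,\frac{X_h}{b_h(x)}\Big)\in\cdot\Big)\to\nu_h$$ vaguely on $(0,\infty]\times[-\infty,\infty]^h$ as $x\to\infty$ (relatively compact sets of this space are those whose points have first coordinate bounded below by some $\epsilon>0$), and for every $y_0>0$: (a) the measure $\nu_h([y_0,\infty]\times\cdot)$ on $\mathbb R^h$ is not concentrated on a line through infinity; (b) the measure $\nu_h([y_0,\infty]\times\cdot)$ on $\mathbb R^h$ is not concentrated on a hyperplane; (c) the measure $\nu_h(\cdot\times\mathbb R^h)$ on $(0,\infty]$ is not concentrated at $\{\infty\}$. Under this assumption $\mathbb P(X_0>x)$ is regularly varying with index $-\alpha$ for some $\alpha>0$, each $b_j$ is regularly varying with some index $\kappa_j\in\mathbb R$ (the lag-$j$ conditional scaling exponent), and $\nu_h((ty_0,\infty]\times\prod_i[-\infty,t^{\kappa_i}y_i])=t^{-\alpha}\nu_h((y_0,\infty]\times\prod_i[-\infty,y_i])$. *)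

theory Defs
  imports "HOL-Probability.Probability"
begin

definition regularly_varying :: "(real \<Rightarrow> real) \<Rightarrow> real \<Rightarrow> bool" where
  "regularly_varying F \<rho> \<longleftrightarrow>
     eventually (\<lambda>x. F x > 0) at_top \<and>
     (\<forall>t>0. ((\<lambda>x. F (t * x) / F x) \<longlongrightarrow> t powr \<rho>) at_top)"

definition tailprob :: "'a measure \<Rightarrow> (int \<Rightarrow> 'a \<Rightarrow> real) \<Rightarrow> real \<Rightarrow> real" where
  "tailprob M X x = measure M {\<omega> \<in> space M. X 0 \<omega> > x}"

definition cev_vec ::
  "(int \<Rightarrow> 'a \<Rightarrow> real) \<Rightarrow> (nat \<Rightarrow> real \<Rightarrow> real) \<Rightarrow> nat \<Rightarrow> real \<Rightarrow> 'a \<Rightarrow> (nat \<Rightarrow> ereal)" where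
  "cev_vec X b h x \<omega> =
     (\<lambda>i\<in>{0..h}. if i = 0 then ereal (X 0 \<omega> / x) else ereal (X (int i) \<omega> / b i x))"

text \<open>Test functions for vague convergence on (0,inf] x [-inf,inf]^h: continuous
  real functions vanishing on {y_0 < eps} for some eps > 0 (compact support).\<close>
definition cev_testfun :: "nat \<Rightarrow> ((nat \<Rightarrow> ereal) \<Rightarrow> real) \<Rightarrow> bool" where
  "cev_testfun h f \<longleftrightarrow>
     continuous_map (product_topology (\<lambda>_. euclidean) {0..h}) euclideanreal f \<and>
     (\<exists>\<epsilon>>0. \<forall>y. y 0 < ereal \<epsilon> \<longrightarrow> f y = 0)"

text \<open>nu is a nonzero Radon measure on (0,inf] x [-inf,inf]^h.\<close>
definition cev_radon :: "nat \<Rightarrow> (nat \<Rightarrow> ereal) measure \<Rightarrow> bool" where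
  "cev_radon h \<nu> \<longleftrightarrow>
     sets \<nu> = sets (PiM {0..h} (\<lambda>_. borel :: ereal measure)) \<and>
     emeasure \<nu> {y \<in> space \<nu>. y 0 \<le> 0} = 0 \<and>
     (\<forall>\<epsilon>>0. emeasure \<nu> {y \<in> space \<nu>. ereal \<epsilon> \<le> y 0} < \<infinity>) \<and>
     emeasure \<nu> (space \<nu>) \<noteq> 0"

definition cev_vague :: "'a measure \<Rightarrow> (int \<Rightarrow> 'a \<Rightarrow> real) \<Rightarrow> (nat \<Rightarrow> real \<Rightarrow> real)
    \<Rightarrow> nat \<Rightarrow> (nat \<Rightarrow> ereal) measure \<Rightarrow> bool" where
  "cev_vague M X b h \<nu> \<longleftrightarrow>
     (\<forall>f. cev_testfun h f \<longrightarrow>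
        ((\<lambda>x. (\<integral>\<omega>. f (cev_vec X b h x \<omega>) \<partial>M) / tailprob M X x)
           \<longlongrightarrow> (\<integral>y. f y \<partial>\<nu>)) at_top)"

text \<open>Nondegeneracy conditions (a), (b), (c) of Assumption CEV.
  (a): nu([y0,inf] x .) restricted to R^h is not concentrated on the points at infinity,
  i.e. gives positive mass to R^h. (b): it is not concentrated on an affine hyperplane
  of R^h. (c): nu(. x R^h) on (0,inf] is not concentrated at {inf}.\<close>
definition cev_nondeg :: "nat \<Rightarrow> (nat \<Rightarrow> ereal) measure \<Rightarrow> bool" where
  "cev_nondeg h \<nu> \<longleftrightarrow>
     (\<forall>y0>0. emeasure \<nu> {y \<in> space \<nu>. ereal y0 \<le> y 0 \<and> (\<forall>i\<in>{1..h}. \<bar>y i\<bar> \<noteq> \<infinity>)} \<noteq> 0) \<and>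
     (\<forall>y0>0. \<forall>(a :: nat \<Rightarrow> real) (c :: real). (\<exists>i\<in>{1..h}. a i \<noteq> 0) \<longrightarrow>
        emeasure \<nu> {y \<in> space \<nu>. ereal y0 \<le> y 0 \<and> (\<forall>i\<in>{1..h}. \<bar>y i\<bar> \<noteq> \<infinity>) \<and>
            (\<Sum>i=1..h. a i * real_of_ereal (y i)) \<noteq> c} \<noteq> 0) \<and>
     emeasure \<nu> {y \<in> space \<nu>. 0 < y 0 \<and> y 0 < \<infinity> \<and> (\<forall>i\<in>{1..h}. \<bar>y i\<bar> \<noteq> \<infinity>)} \<noteq> 0"

definition CEV :: "'a measure \<Rightarrow> (int \<Rightarrow> 'a \<Rightarrow> real) \<Rightarrow> (nat \<Rightarrow> real \<Rightarrow> real)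
    \<Rightarrow> (nat \<Rightarrow> (nat \<Rightarrow> ereal) measure) \<Rightarrow> bool" where
  "CEV M X b \<nu> \<longleftrightarrow>
     (\<forall>j\<ge>1. \<forall>x>0. b j x > 0) \<and>
     (\<forall>h\<ge>1. cev_radon h (\<nu> h) \<and> cev_vague M X b h (\<nu> h) \<and> cev_nondeg h (\<nu> h))"

definition prod_exceed_set :: "nat \<Rightarrow> (nat \<Rightarrow> ereal) measure \<Rightarrow> (nat \<Rightarrow> ereal) set" where
  "prod_exceed_set h \<nu> = {y \<in> space \<nu>. 0 < y 0 \<and> 0 \<le> y h \<and> 1 < y 0 * y h}"

end

theory Submission
  imports Defs
begin

text \<open>Approximate the indicator of \<open>{y\<^sub>0 y\<^sub>h > 1}\<close> from inside and from outside by continuous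
  functions supported in \<open>{y\<^sub>0 \<ge> \<epsilon>}\<close>. Vague convergence controls the event
  \<open>X\<^sub>0 X\<^sub>h > x b\<^sub>h(x) v\<close> on \<open>\<epsilon>x \<le> X\<^sub>0 \<le> Kx\<close>, the tail of \<open>X\<^sub>0\<close> controls \<open>X\<^sub>0 > Kx\<close>, and Markov's
  inequality with the moment condition makes \<open>X\<^sub>0 \<le> \<epsilon>x\<close> negligible. Hence the normalised
  probability has liminf \<open>\<ge> \<nu>\<^sub>h{y\<^sub>0 y\<^sub>h > 1}\<close> for \<open>v < 1\<close> and limsup \<open>\<le>\<close> it for \<open>v > 1\<close>.
  Replacing \<open>x\<close> by \<open>t x\<close> multiplies the threshold by about \<open>t^(1+\<kappa>) u\<close> and the normalisation by
  \<open>t^(-\<alpha>)\<close>; letting \<open>t\<close> approach the root of \<open>t^(1+\<kappa>) u = 1\<close> from both sides gives the limit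
  \<open>u^(-\<alpha>/(1+\<kappa>)) \<nu>\<^sub>h{y\<^sub>0 y\<^sub>h > 1}\<close>. If \<open>1 + \<kappa> \<le> 0\<close> the moment condition forces \<open>X\<^sub>0 X\<^sub>h = 0\<close>
  almost surely, and both sides vanish.\<close>

definition ereal_clamp :: "real \<Rightarrow> real \<Rightarrow> ereal \<Rightarrow> real" where
  "ereal_clamp a b z = real_of_ereal (max (ereal a) (min (ereal b) z))"

lemma continuous_map_ereal_clamp:
  assumes "a \<le> b"
  shows "continuous_map euclidean euclideanreal (ereal_clamp a b)"
proof -
  have "continuous_on UNIV (\<lambda>z::ereal. max (ereal a) (min (ereal b) z))"
    by (intro continuous_intros)
  moreover have "continuous_on (range (\<lambda>z::ereal. max (ereal a) (min (ereal b) z))) real_of_ereal"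
  proof (rule continuous_at_imp_continuous_on, safe)
    fix z :: ereal
    have "\<bar>max (ereal a) (min (ereal b) z)\<bar> \<noteq> \<infinity>"
      using assms by (cases z) (auto simp: max_def min_def)
    then show "isCont real_of_ereal (max (ereal a) (min (ereal b) z))"
      by (rule continuous_at_of_ereal)
  qed
  ultimately show ?thesis
    unfolding ereal_clamp_def using continuous_on_compose by (fastforce simp: o_def)
qed

lemma borel_measurable_ereal_clamp[measurable]: "ereal_clamp a b \<in> borel_measurable borel"
  unfolding ereal_clamp_def by measurable

lemma ereal_clamp_ereal: "a \<le> b \<Longrightarrow> ereal_clamp a b (ereal r) = max a (min b r)"
  by (simp add: ereal_clamp_def max_def min_def)

lemma ereal_clamp_bounds: "a \<le> b \<Longrightarrow> a \<le> ereal_clamp a b z \<and> ereal_clamp a b z \<le> b"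
  by (cases z) (auto simp: ereal_clamp_def max_def min_def)

lemma ereal_clamp_le: "a \<le> b \<Longrightarrow> ereal a \<le> z \<Longrightarrow> ereal (ereal_clamp a b z) \<le> z"
  by (cases z) (auto simp: ereal_clamp_def max_def min_def)

lemma ereal_clamp_nonpos: "0 \<le> b \<Longrightarrow> z \<le> 0 \<Longrightarrow> ereal_clamp 0 b z = 0"
  by (cases z) (auto simp: ereal_clamp_def max_def min_def)

text \<open>A \<open>window\<close> is a continuous approximation of the indicator of \<open>{y\<^sub>0 y\<^sub>h > hi}\<close>
  that vanishes for \<open>y\<^sub>0 < e/2\<close>, hence is a test function for vague convergence on
  \<open>(0,\<infinity>] \<times> [-\<infinity>,\<infinity>]\<^sup>h\<close>; clamping \<open>y\<^sub>0\<close> at \<open>K\<close> and \<open>y\<^sub>h\<close> at \<open>C\<close> keeps the product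
  real-valued and continuous at infinite coordinates.\<close>

definition ramp :: "real \<Rightarrow> ereal \<Rightarrow> real" where
  "ramp a z = (ereal_clamp (a/2) a z - a/2) * (2/a)"

definition product_ramp :: "real \<Rightarrow> real \<Rightarrow> real \<Rightarrow> real \<Rightarrow> ereal \<Rightarrow> ereal \<Rightarrow> real" where
  "product_ramp K C lo hi y0 yh =
     (max lo (min hi (ereal_clamp 0 K y0 * ereal_clamp 0 C yh)) - lo) * inverse (hi - lo)"

definition window :: "real \<Rightarrow> real \<Rightarrow> real \<Rightarrow> real \<Rightarrow> real \<Rightarrow> ereal \<Rightarrow> ereal \<Rightarrow> real" where
  "window e K C lo hi y0 yh = ramp e y0 * product_ramp K C lo hi y0 yh"

lemma borel_measurable_ramp[measurable]: "ramp a \<in> borel_measurable borel"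
  unfolding ramp_def by measurable

lemma ramp_bounds: "a > 0 \<Longrightarrow> 0 \<le> ramp a z \<and> ramp a z \<le> 1"
  using ereal_clamp_bounds[of "a/2" a z] by (auto simp: ramp_def field_simps)

lemma ramp_eq_0: "a > 0 \<Longrightarrow> z < ereal (a/2) \<Longrightarrow> ramp a z = 0"
  by (cases z) (auto simp: ramp_def ereal_clamp_def max_def min_def)

lemma ramp_eq_1: "a > 0 \<Longrightarrow> ereal a \<le> z \<Longrightarrow> ramp a z = 1"
  by (cases z) (auto simp: ramp_def ereal_clamp_def max_def min_def)

lemma ramp_pos_imp: "a > 0 \<Longrightarrow> ramp a z > 0 \<Longrightarrow> z > ereal (a/2)"
  by (cases z) (auto simp: ramp_def ereal_clamp_def max_def min_def zero_less_divide_iff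
                     split: if_splits)

lemma product_ramp_bounds: "lo < hi \<Longrightarrow> 0 \<le> product_ramp K C lo hi y0 yh \<and> product_ramp K C lo hi y0 yh \<le> 1"
  by (auto simp: product_ramp_def field_simps max_def min_def)

lemma window_bounds: "e > 0 \<Longrightarrow> lo < hi \<Longrightarrow> 0 \<le> window e K C lo hi y0 yh \<and> window e K C lo hi y0 yh \<le> 1"
  using ramp_bounds[of e y0] product_ramp_bounds[of lo hi K C y0 yh]
  by (auto simp: window_def intro: mult_le_one)

lemma window_eq_0: "e > 0 \<Longrightarrow> y0 < ereal (e/2) \<Longrightarrow> window e K C lo hi y0 yh = 0"
  by (simp add: window_def ramp_eq_0)

lemma window_pos_imp:
  assumes "e > 0" "0 \<le> lo" "lo < hi" "K \<ge> 0" "C \<ge> 0" "window e K C lo hi y0 yh > 0"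
  shows "y0 > ereal (e/2) \<and> 0 < yh \<and> ereal lo < y0 * yh"
proof -
  have "ramp e y0 > 0" and ps: "product_ramp K C lo hi y0 yh > 0"
    using assms ramp_bounds[of e y0] product_ramp_bounds[of lo hi K C y0 yh]
    by (auto simp: window_def zero_less_mult_iff)
  then have y0: "y0 > ereal (e/2)" using ramp_pos_imp assms(1) by blast
  then have y0_nonneg: "y0 \<ge> 0"
    using assms(1) by (cases y0) auto
  have prod: "ereal_clamp 0 K y0 * ereal_clamp 0 C yh > lo"
    using ps assms by (auto simp: product_ramp_def max_def min_def zero_less_mult_iff split: if_splits)
  have nonneg: "0 \<le> ereal_clamp 0 K y0" "0 \<le> ereal_clamp 0 C yh"
    using ereal_clamp_bounds assms by auto
  have yh: "yh > 0"
  proof (rule ccontr)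
    assume "\<not> yh > 0"
    then have "ereal_clamp 0 C yh = 0" using assms by (intro ereal_clamp_nonpos) auto
    then show False using prod assms by simp
  qed
  have "ereal lo < ereal (ereal_clamp 0 K y0) * ereal (ereal_clamp 0 C yh)" using prod by simp
  also have "\<dots> \<le> y0 * yh"
    using ereal_clamp_le[of 0 K y0] ereal_clamp_le[of 0 C yh] nonneg y0_nonneg yh assms
    by (intro ereal_mult_mono) (auto simp: zero_ereal_def)
  finally show ?thesis using y0 yh by simp
qed

lemma window_eq_1:
  assumes "e > 0" "lo < hi" "ereal e \<le> y0" "y0 \<le> ereal K" "0 \<le> yh" "ereal hi < y0 * yh"
    "hi \<le> C * e" "C \<ge> 0"
  shows "window e K C lo hi y0 yh = 1"
proof -
  obtain r where r: "y0 = ereal r" "e \<le> r" "r \<le> K" using assms by (cases y0) auto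
  have clamp_y0: "ereal_clamp 0 K y0 = r" using r assms by (simp add: ereal_clamp_ereal)
  have "hi \<le> ereal_clamp 0 K y0 * ereal_clamp 0 C yh"
  proof (cases "ereal C \<le> yh")
    case True
    then have "ereal_clamp 0 C yh = C" using assms by (cases yh) (auto simp: ereal_clamp_def)
    then show ?thesis using clamp_y0 r assms by (smt (verit) mult.commute mult_left_mono)
  next
    case False
    then obtain s where "yh = ereal s" "s < C" "0 \<le> s" using assms(5) by (cases yh) auto
    then show ?thesis using clamp_y0 r assms(6) by (simp add: ereal_clamp_ereal)
  qed
  then have "product_ramp K C lo hi y0 yh = 1" using assms by (simp add: product_ramp_def)
  then show ?thesis using ramp_eq_1 assms by (simp add: window_def)
qed

lemma continuous_map_ramp_component:
  assumes "i \<in> I" "a > 0"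
  shows "continuous_map (product_topology (\<lambda>_. euclidean) I) euclideanreal (\<lambda>y. ramp a (y i))"
proof -
  have "continuous_map (product_topology (\<lambda>_. euclidean) I) euclideanreal
          (\<lambda>y. ereal_clamp (a/2) a (y i))"
    using continuous_map_compose[OF continuous_map_product_projection[OF assms(1)]
        continuous_map_ereal_clamp[of "a/2" a]] assms(2) by (simp add: o_def)
  then show ?thesis unfolding ramp_def by (intro continuous_intros)
qed

lemma continuous_map_window_components:
  assumes "i \<in> I" "j \<in> I" "e > 0" "K \<ge> 0" "C \<ge> 0"
  shows "continuous_map (product_topology (\<lambda>_. euclidean) I) euclideanreal
           (\<lambda>y. window e K C lo hi (y i) (y j))"
proof -
  have "continuous_map (product_topology (\<lambda>_. euclidean) I) euclideanreal
          (\<lambda>y. ereal_clamp 0 c (y k))" if "k \<in> I" "c \<ge> 0" for k c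
    using continuous_map_compose[OF continuous_map_product_projection[OF that(1)]
        continuous_map_ereal_clamp[OF that(2)]] by (simp add: o_def)
  then show ?thesis
    unfolding window_def product_ramp_def using assms
    by (intro continuous_intros continuous_map_ramp_component) auto
qed

lemma cev_testfun_ramp: "a > 0 \<Longrightarrow> cev_testfun h (\<lambda>y. ramp a (y 0))"
  unfolding cev_testfun_def
  by (auto intro!: continuous_map_ramp_component exI[of _ "a/2"] ramp_eq_0)

lemma cev_testfun_window:
  "e > 0 \<Longrightarrow> K \<ge> 0 \<Longrightarrow> C \<ge> 0 \<Longrightarrow> cev_testfun h (\<lambda>y. window e K C lo hi (y 0) (y h))"
  unfolding cev_testfun_def
  by (auto intro!: continuous_map_window_components exI[of _ "e/2"] window_eq_0)

lemma integrable_bounded_support: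
  fixes f :: "'a \<Rightarrow> real"
  assumes [measurable]: "f \<in> borel_measurable N" "A \<in> sets N" and "emeasure N A < \<infinity>"
    and "\<And>y. y \<in> space N \<Longrightarrow> \<bar>f y\<bar> \<le> 1" and "\<And>y. y \<in> space N \<Longrightarrow> y \<notin> A \<Longrightarrow> f y = 0"
  shows "integrable N f"
proof (rule Bochner_Integration.integrable_bound)
  show "integrable N (indicator A :: 'a \<Rightarrow> real)"
    using assms by (intro integrable_real_indicator) auto
  show "AE y in N. norm (f y) \<le> norm (indicator A y :: real)"
    using assms by (intro AE_I2) (auto simp: indicator_def)
qed fact

lemma integral_le_measure_of_support:
  fixes f :: "'a \<Rightarrow> real"
  assumes [measurable]: "f \<in> borel_measurable N" "A \<in> sets N" and "emeasure N A < \<infinity>"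
    and f01: "\<And>y. y \<in> space N \<Longrightarrow> 0 \<le> f y \<and> f y \<le> 1"
    and support: "\<And>y. y \<in> space N \<Longrightarrow> 0 < f y \<Longrightarrow> y \<in> A"
  shows "(\<integral>y. f y \<partial>N) \<le> measure N A"
proof -
  have off_A: "f y = 0" if "y \<in> space N" "y \<notin> A" for y
    using f01 support that by force
  have "(\<integral>y. f y \<partial>N) \<le> (\<integral>y. indicator A y \<partial>N)"
  proof (rule integral_mono)
    show "integrable N f"
      by (rule integrable_bounded_support[OF assms(1-3)]) (use f01 off_A in auto)
    show "integrable N (indicator A :: 'a \<Rightarrow> real)"
      using assms by (intro integrable_real_indicator) auto
    show "f y \<le> indicator A y" if "y \<in> space N" for y
      using f01 off_A that by (cases "y \<in> A") auto
  qed
  then show ?thesis using assms by (simp add: Int_absorb2 sets.sets_into_space)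
qed

lemma measure_le_integral_of_one_on:
  fixes f :: "'a \<Rightarrow> real"
  assumes "integrable N f" "A \<in> sets N" "emeasure N A < \<infinity>"
    and "\<And>y. y \<in> space N \<Longrightarrow> 0 \<le> f y" and "\<And>y. y \<in> A \<Longrightarrow> f y = 1"
  shows "measure N A \<le> (\<integral>y. f y \<partial>N)"
proof -
  have "(\<integral>y. indicator A y \<partial>N) \<le> (\<integral>y. f y \<partial>N)"
    using assms by (intro integral_mono integrable_real_indicator) (auto simp: indicator_def)
  then show ?thesis using assms by (simp add: Int_absorb2 sets.sets_into_space)
qed

lemma filtermap_times_pos_at_top: "t > 0 \<Longrightarrow> filtermap (\<lambda>x. t * x) at_top = (at_top :: real filter)"
  by (rule filtermap_fun_inverse[of "\<lambda>x. inverse t * x"])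
     (auto intro!: filterlim_tendsto_pos_mult_at_top filterlim_ident tendsto_const)

lemma eventually_at_top_scale_iff:
  "t > 0 \<Longrightarrow> eventually (\<lambda>x. P (t * x)) at_top \<longleftrightarrow> eventually P (at_top :: real filter)"
  using eventually_filtermap[of P "\<lambda>x. t * x" at_top] by (simp add: filtermap_times_pos_at_top)

lemma eventually_lower_bound_mult:
  fixes f g :: "'a \<Rightarrow> real"
  assumes f: "\<And>e. e > 0 \<Longrightarrow> eventually (\<lambda>x. a - e \<le> f x) F"
    and g: "(g \<longlongrightarrow> c) F" and g_nonneg: "eventually (\<lambda>x. 0 \<le> g x) F" and e: "e > 0"
  shows "eventually (\<lambda>x. a * c - e \<le> f x * g x) F"
proof -
  define e' where "e' = e / (2 * (\<bar>c\<bar> + 1))"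
  have e': "e' > 0" "e' * \<bar>c\<bar> \<le> e / 2"
    using e by (auto simp: e'_def field_simps)
  have "((\<lambda>x. (a - e') * g x) \<longlongrightarrow> (a - e') * c) F"
    by (rule tendsto_mult_left[OF g])
  then have "eventually (\<lambda>x. (a - e') * c - e / 2 < (a - e') * g x) F"
    by (rule order_tendstoD(1)) (use e in simp)
  with f[OF e'(1)] g_nonneg show ?thesis
  proof eventually_elim
    case (elim x)
    have "(a - e') * g x \<le> f x * g x" using elim by (intro mult_right_mono) auto
    moreover have "- (e' * c) \<ge> - (e / 2)" using e'(2) abs_ge_self[of c] e'(1)
      by (smt (verit) mult_left_mono)
    ultimately show ?case using elim by (simp add: algebra_simps)
  qed
qed

lemma eventually_upper_bound_mult:
  fixes f g :: "'a \<Rightarrow> real"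
  assumes f: "\<And>e. e > 0 \<Longrightarrow> eventually (\<lambda>x. f x \<le> a + e) F"
    and g: "(g \<longlongrightarrow> c) F" and g_nonneg: "eventually (\<lambda>x. 0 \<le> g x) F" and e: "e > 0"
  shows "eventually (\<lambda>x. f x * g x \<le> a * c + e) F"
proof -
  have neg: "eventually (\<lambda>x. - a - e \<le> - f x) F" if "e > 0" for e
    using f[OF that] by eventually_elim simp
  have "eventually (\<lambda>x. - a * c - e \<le> - f x * g x) F"
    by (rule eventually_lower_bound_mult[where a="- a" and f="\<lambda>x. - f x"])
       (use neg g g_nonneg e in auto)
  then show ?thesis by eventually_elim simp
qed

lemma tendsto_of_bracketing:
  fixes f :: "'a \<Rightarrow> real" and g :: "real \<Rightarrow> real"
  assumes cont: "isCont g t0" and "a < t0"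
    and lower: "\<And>t e. a < t \<Longrightarrow> t < t0 \<Longrightarrow> e > 0 \<Longrightarrow> eventually (\<lambda>x. g t - e \<le> f x) F"
    and upper: "\<And>t e. t0 < t \<Longrightarrow> e > 0 \<Longrightarrow> eventually (\<lambda>x. f x \<le> g t + e) F"
  shows "(f \<longlongrightarrow> g t0) F"
proof -
  have lim_left: "(g \<longlongrightarrow> g t0) (at_left t0)" and lim_right: "(g \<longlongrightarrow> g t0) (at_right t0)"
    using cont by (simp_all add: continuous_at filterlim_at_split)
  show ?thesis
  proof (rule order_tendstoI)
    fix y assume y: "y < g t0"
    define e where "e = (g t0 - y) / 2"
    have "eventually (\<lambda>t. g t0 - e < g t) (at_left t0)"
      using y by (intro order_tendstoD(1)[OF lim_left]) (auto simp: e_def)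
    then obtain s where s: "s < t0" "\<And>t. s < t \<Longrightarrow> t < t0 \<Longrightarrow> g t0 - e < g t"
      by (auto simp: eventually_at_left_field)
    define t where "t = (max a s + t0) / 2"
    have t: "a < t" "t < t0" "g t0 - e < g t"
      using s \<open>a < t0\<close> by (auto simp: t_def)
    have "e > 0" using y by (simp add: e_def)
    have "y = g t0 - 2 * e" by (simp add: e_def field_simps)
    from lower[OF t(1,2) \<open>e > 0\<close>] show "eventually (\<lambda>x. y < f x) F"
      by (rule eventually_mono) (use t(3) \<open>y = g t0 - 2 * e\<close> in linarith)
  next
    fix y assume y: "g t0 < y"
    define e where "e = (y - g t0) / 2"
    have "eventually (\<lambda>t. g t < g t0 + e) (at_right t0)"
      using y by (intro order_tendstoD(2)[OF lim_right]) (auto simp: e_def)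
    then obtain s where s: "t0 < s" "\<And>t. t0 < t \<Longrightarrow> t < s \<Longrightarrow> g t < g t0 + e"
      by (auto simp: eventually_at_right_field)
    define t where "t = (s + t0) / 2"
    have t: "t0 < t" "g t < g t0 + e" using s by (auto simp: t_def)
    have "e > 0" using y by (simp add: e_def)
    have "y = g t0 + 2 * e" by (simp add: e_def field_simps)
    from upper[OF t(1) \<open>e > 0\<close>] show "eventually (\<lambda>x. f x < y) F"
      by (rule eventually_mono) (use t(2) \<open>y = g t0 + 2 * e\<close> in linarith)
  qed
qed

lemma power_bound_of_doubling:
  fixes G :: "real \<Rightarrow> real"
  assumes "x0 > 0" "q \<ge> 0" and step: "\<And>x. x \<ge> x0 \<Longrightarrow> G (2 * x) \<le> q * G x"
  shows "G (2 ^ n * x0) \<le> q ^ n * G x0"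
proof (induction n)
  case (Suc n)
  have "2 ^ n * x0 \<ge> x0" using assms(1) by (simp add: mult_le_cancel_right1)
  then have "G (2 ^ Suc n * x0) \<le> q * G (2 ^ n * x0)" using step by (simp add: mult.assoc)
  also have "\<dots> \<le> q * (q ^ n * G x0)" using Suc assms(2) by (intro mult_left_mono)
  finally show ?case by (simp add: mult.assoc)
qed simp

locale cev_lag =
  fixes M :: "'a measure" and X :: "int \<Rightarrow> 'a \<Rightarrow> real"
    and b :: "nat \<Rightarrow> real \<Rightarrow> real" and \<nu> :: "nat \<Rightarrow> (nat \<Rightarrow> ereal) measure"
    and \<alpha> :: real and \<kappa> :: "nat \<Rightarrow> real" and h :: nat and \<delta> :: real
  assumes prob: "prob_space M"
    and measurable_X: "\<forall>t. X t \<in> borel_measurable M"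
    and cev: "CEV M X b \<nu>"
    and alpha_pos: "\<alpha> > 0"
    and tail_rv: "regularly_varying (tailprob M X) (- \<alpha>)"
    and scaling_rv: "\<forall>j\<ge>1. regularly_varying (b j) (\<kappa> j)"
    and lag_pos: "h \<ge> 1"
    and exceed_finite: "emeasure (\<nu> h) (prod_exceed_set h (\<nu> h)) < \<infinity>"
    and delta_pos: "\<delta> > 0"
    and truncated_moment: "((\<lambda>\<epsilon>. Limsup at_top (\<lambda>x.
            (\<integral>\<^sup>+\<omega>. ennreal (\<bar>X 0 \<omega> / x * indicator {\<omega>. X 0 \<omega> \<le> \<epsilon> * x} \<omega>
                              * (X (int h) \<omega> / b h x)\<bar> powr \<delta>) \<partial>M)
            / ennreal (tailprob M X x))) \<longlongrightarrow> 0) (at_right 0)"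
begin

sublocale P: prob_space M by (rule prob)

abbreviation "F \<equiv> tailprob M X"
abbreviation "B \<equiv> b h"
abbreviation "N \<equiv> \<nu> h"
abbreviation "S \<equiv> prod_exceed_set h N"
abbreviation "c0 \<equiv> measure N S"
abbreviation "p \<equiv> 1 + \<kappa> h"

definition trunc_moment :: "real \<Rightarrow> real \<Rightarrow> ennreal" where
  "trunc_moment \<epsilon> x = (\<integral>\<^sup>+\<omega>. ennreal (\<bar>X 0 \<omega> / x * indicator {\<omega>. X 0 \<omega> \<le> \<epsilon> * x} \<omega>
                              * (X (int h) \<omega> / b h x)\<bar> powr \<delta>) \<partial>M)"

definition product_exceed :: "real \<Rightarrow> 'a set" where
  "product_exceed c = {\<omega> \<in> space M. c < X 0 \<omega> * X (int h) \<omega>}"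

definition exceed_ratio :: "real \<Rightarrow> real \<Rightarrow> real" where
  "exceed_ratio u x = measure M (product_exceed (x * B x * u)) / F x"

lemma measurable_X_at[measurable]: "X t \<in> borel_measurable M"
  using measurable_X by auto

lemma eventually_tail_pos: "eventually (\<lambda>x. F x > 0) at_top"
  using tail_rv by (simp add: regularly_varying_def)

lemma tail_ratio: "t > 0 \<Longrightarrow> ((\<lambda>x. F (t * x) / F x) \<longlongrightarrow> t powr (- \<alpha>)) at_top"
  using tail_rv by (simp add: regularly_varying_def)

lemma tail_ratio_inverse: "t > 0 \<Longrightarrow> ((\<lambda>x. F x / F (t * x)) \<longlongrightarrow> t powr \<alpha>) at_top"
  using tendsto_inverse[OF tail_ratio, of t] by (simp add: powr_minus)

lemma tail_nonneg: "F x \<ge> 0"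
  by (simp add: tailprob_def)

lemma scaling_pos: "x > 0 \<Longrightarrow> B x > 0"
  using cev lag_pos by (simp add: CEV_def)

lemma scaling_ratio: "t > 0 \<Longrightarrow> ((\<lambda>x. B (t * x) / B x) \<longlongrightarrow> t powr \<kappa> h) at_top"
  using scaling_rv lag_pos by (simp add: regularly_varying_def)

lemma nu_radon: "cev_radon h N"
  using cev lag_pos by (simp add: CEV_def)

lemma vague_limit: "cev_testfun h f \<Longrightarrow>
    ((\<lambda>x. (\<integral>\<omega>. f (cev_vec X b h x \<omega>) \<partial>M) / F x) \<longlongrightarrow> (\<integral>y. f y \<partial>N)) at_top"
  using cev lag_pos by (simp add: CEV_def cev_vague_def)

lemma nu_bounded_away_finite: "e > 0 \<Longrightarrow> emeasure N {y \<in> space N. ereal e \<le> y 0} < \<infinity>"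
  using nu_radon by (simp add: cev_radon_def)

lemma cev_vec_0: "cev_vec X b h x \<omega> 0 = ereal (X 0 \<omega> / x)"
  by (simp add: cev_vec_def)

lemma cev_vec_lag: "cev_vec X b h x \<omega> h = ereal (X (int h) \<omega> / B x)"
  using lag_pos by (simp add: cev_vec_def)

lemma measurable_component[measurable]: "i \<in> {0..h} \<Longrightarrow> (\<lambda>y. y i) \<in> borel_measurable N"
  using nu_radon unfolding cev_radon_def by (subst measurable_cong_sets[of _ "PiM {0..h} (\<lambda>_. borel)"]) auto

lemma measurable_component_0[measurable]: "(\<lambda>y. y 0) \<in> borel_measurable N"
  and measurable_component_lag[measurable]: "(\<lambda>y. y h) \<in> borel_measurable N"
  by (rule measurable_component; simp)+

lemma exceed_set_sets[measurable]: "S \<in> sets N"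
  unfolding prod_exceed_set_def by measurable

lemma exceed_subset_sets[measurable]: "Measurable.pred N P \<Longrightarrow> {y \<in> S. P y} \<in> sets N"
proof -
  assume [measurable]: "Measurable.pred N P"
  have "{y \<in> S. P y} = S \<inter> {y \<in> space N. P y}"
    using sets.sets_into_space[OF exceed_set_sets] by auto
  then show ?thesis by simp
qed

lemma emeasure_exceed_subset: "emeasure N {y \<in> S. P y} < \<infinity>"
  by (rule le_less_trans[OF emeasure_mono exceed_finite]) auto

lemma product_exceed_sets[measurable]: "product_exceed c \<in> sets M"
  unfolding product_exceed_def by measurable

lemma product_exceed_antimono: "c \<le> c' \<Longrightarrow> product_exceed c' \<subseteq> product_exceed c"
  unfolding product_exceed_def by auto

lemma measurable_window_M[measurable]:
  "(\<lambda>\<omega>. window e K C lo hi (ereal (X 0 \<omega> / x)) (ereal (X (int h) \<omega> / B x))) \<in> borel_measurable M"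
  unfolding window_def product_ramp_def ramp_def by measurable

lemma measurable_window_N[measurable]: "(\<lambda>y. window e K C lo hi (y 0) (y h)) \<in> borel_measurable N"
  unfolding window_def product_ramp_def ramp_def by measurable

lemma integrable_window_N: "e > 0 \<Longrightarrow> lo < hi \<Longrightarrow> integrable N (\<lambda>y. window e K C lo hi (y 0) (y h))"
  by (rule integrable_bounded_support[where A="{y \<in> space N. ereal (e/2) \<le> y 0}"])
     (use nu_bounded_away_finite window_bounds window_eq_0 in auto)

lemma vague_limit_window: "e > 0 \<Longrightarrow> K \<ge> 0 \<Longrightarrow> C \<ge> 0 \<Longrightarrow>
    ((\<lambda>x. (\<integral>\<omega>. window e K C lo hi (ereal (X 0 \<omega> / x)) (ereal (X (int h) \<omega> / B x)) \<partial>M) / F x)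
       \<longlongrightarrow> (\<integral>y. window e K C lo hi (y 0) (y h) \<partial>N)) at_top"
  using vague_limit[OF cev_testfun_window, of e K C lo hi] by (simp add: cev_vec_0 cev_vec_lag)

lemma nu_tail_bound:
  assumes K: "K > 0"
  shows "measure N {y \<in> space N. ereal (2 * K) \<le> y 0} \<le> K powr (- \<alpha>)"
proof -
  have K2: "2 * K > 0" using K by simp
  have lim: "((\<lambda>x. (\<integral>\<omega>. ramp (2 * K) (ereal (X 0 \<omega> / x)) \<partial>M) / F x)
      \<longlongrightarrow> (\<integral>y. ramp (2 * K) (y 0) \<partial>N)) at_top"
    using vague_limit[OF cev_testfun_ramp[OF K2]] by (simp add: cev_vec_0)
  have "eventually (\<lambda>x. (\<integral>\<omega>. ramp (2 * K) (ereal (X 0 \<omega> / x)) \<partial>M) / F x \<le> F (K * x) / F x) at_top"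
    using eventually_gt_at_top[of 0]
  proof eventually_elim
    case (elim x)
    have "(\<integral>\<omega>. ramp (2 * K) (ereal (X 0 \<omega> / x)) \<partial>M) \<le> measure M {\<omega> \<in> space M. K * x < X 0 \<omega>}"
    proof (rule integral_le_measure_of_support)
      show "\<omega> \<in> {\<omega> \<in> space M. K * x < X 0 \<omega>}"
        if "\<omega> \<in> space M" "ramp (2 * K) (ereal (X 0 \<omega> / x)) > 0" for \<omega>
        using ramp_pos_imp[OF K2 that(2)] that(1) elim by (simp add: field_simps)
    qed (use ramp_bounds K2 P.emeasure_finite in \<open>auto simp: less_top[symmetric]\<close>)
    then show ?case by (simp add: tailprob_def divide_right_mono)
  qed
  then have "(\<integral>y. ramp (2 * K) (y 0) \<partial>N) \<le> K powr (- \<alpha>)"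
    using tendsto_le[OF _ tail_ratio lim] K by simp
  moreover have "measure N {y \<in> space N. ereal (2 * K) \<le> y 0} \<le> (\<integral>y. ramp (2 * K) (y 0) \<partial>N)"
  proof (rule measure_le_integral_of_one_on)
    show "integrable N (\<lambda>y. ramp (2 * K) (y 0))"
      by (rule integrable_bounded_support[where A="{y \<in> space N. ereal K \<le> y 0}"])
         (use K K2 nu_bounded_away_finite ramp_bounds ramp_eq_0 in auto)
  qed (use K2 nu_bounded_away_finite ramp_bounds ramp_eq_1 in auto)
  ultimately show ?thesis by simp
qed

lemma nu_exceed_bounded_away_tendsto:
  "(\<lambda>n. measure N {y \<in> S. ereal (1 / Suc n) \<le> y 0}) \<longlonglongrightarrow> c0"
proof -
  define A where "A = (\<lambda>n::nat. {y \<in> S. ereal (1 / Suc n) \<le> y 0})"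
  have A_sets: "A n \<in> sets N" for n
    unfolding A_def by measurable
  have "incseq A"
  proof (rule incseq_SucI)
    fix n
    have "ereal (1 / Suc (Suc n)) \<le> ereal (1 / Suc n)" by (simp add: frac_le)
    then show "A n \<subseteq> A (Suc n)"
      unfolding A_def using order_trans[of "ereal (1 / Suc (Suc n))" "ereal (1 / Suc n)"] by blast
  qed
  moreover have union: "(\<Union>n. A n) = S"
  proof (intro antisym subsetI)
    fix y assume y: "y \<in> S"
    then have "0 < y 0" by (simp add: prod_exceed_set_def)
    then have "\<exists>n. ereal (1 / Suc n) \<le> y 0"
    proof (cases "y 0")
      case (real r)
      with \<open>0 < y 0\<close> obtain n where "inverse (Suc n) < r" using reals_Archimedean by auto
      then show ?thesis using real by (intro exI[of _ n]) (simp add: divide_inverse)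
    qed auto
    then show "y \<in> (\<Union>n. A n)" using y by (auto simp: A_def)
  qed (auto simp: A_def)
  ultimately have "(\<lambda>n. measure N (A n)) \<longlonglongrightarrow> measure N (\<Union>n. A n)"
    using A_sets emeasure_exceed_subset[of "\<lambda>_. True"]
    by (intro Lim_measure_incseq) (auto simp: less_top[symmetric])
  then show ?thesis using union by (simp add: A_def)
qed

lemma nu_exceed_truncated:
  assumes e: "e > 0"
  obtains \<epsilon> K where "0 < \<epsilon>" "\<epsilon> < K" "c0 - e \<le> measure N {y \<in> S. ereal \<epsilon> \<le> y 0 \<and> y 0 \<le> ereal K}"
proof -
  have "eventually (\<lambda>n. c0 - e/2 < measure N {y \<in> S. ereal (1 / Suc n) \<le> y 0}) sequentially"
    by (rule order_tendstoD(1)[OF nu_exceed_bounded_away_tendsto]) (use e in simp)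
  then obtain n where n: "c0 - e/2 < measure N {y \<in> S. ereal (1 / Suc n) \<le> y 0}"
    by (auto simp: eventually_sequentially)
  define \<epsilon> where "\<epsilon> = 1 / real (Suc n)"
  have \<epsilon>: "0 < \<epsilon>" by (simp add: \<epsilon>_def)
  have "((\<lambda>K. K powr (- \<alpha>)) \<longlongrightarrow> 0) at_top"
    using alpha_pos by (intro tendsto_neg_powr filterlim_ident) auto
  then have "eventually (\<lambda>K. K powr (- \<alpha>) < e/2 \<and> \<epsilon> < K) at_top"
    using e by (intro eventually_conj order_tendstoD(2) eventually_gt_at_top) auto
  then obtain K where K: "K powr (- \<alpha>) < e/2" "\<epsilon> < K"
    by (auto simp: eventually_at_top_linorder)
  define T where "T = {y \<in> space N. ereal (2 * K) \<le> y 0}"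
  have T: "T \<in> sets N" "emeasure N T \<noteq> \<infinity>"
    using nu_bounded_away_finite[of "2 * K"] \<epsilon> K by (auto simp: T_def)
  have "measure N {y \<in> S. ereal (1 / Suc n) \<le> y 0}
        \<le> measure N ({y \<in> S. ereal \<epsilon> \<le> y 0 \<and> y 0 \<le> ereal (2 * K)} \<union> T)"
    using T emeasure_exceed_subset
    by (intro measure_mono_fmeasurable fmeasurable.Un fmeasurableI)
       (auto simp: T_def \<epsilon>_def prod_exceed_set_def less_top)
  also have "\<dots> \<le> measure N {y \<in> S. ereal \<epsilon> \<le> y 0 \<and> y 0 \<le> ereal (2 * K)} + measure N T"
    using T emeasure_exceed_subset by (intro measure_subadditive) (auto simp: less_top)
  also have "measure N T \<le> K powr (- \<alpha>)"
    unfolding T_def using \<epsilon> K by (intro nu_tail_bound) auto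
  finally show thesis
    using that[OF \<epsilon>, of "2 * K"] n K \<epsilon> by simp
qed

lemma trunc_moment_small:
  assumes m: "m > 0"
  obtains \<epsilon>0 where "\<epsilon>0 > 0"
    "\<And>\<epsilon>. 0 < \<epsilon> \<Longrightarrow> \<epsilon> < \<epsilon>0 \<Longrightarrow> eventually (\<lambda>x. trunc_moment \<epsilon> x \<le> ennreal (m * F x)) at_top"
proof -
  have "eventually (\<lambda>\<epsilon>. Limsup at_top (\<lambda>x. trunc_moment \<epsilon> x / ennreal (F x)) < ennreal m) (at_right 0)"
    using m truncated_moment unfolding trunc_moment_def by (intro order_tendstoD(2)) auto
  then obtain \<epsilon>0 where \<epsilon>0: "\<epsilon>0 > 0" and limsup: "\<And>\<epsilon>. 0 < \<epsilon> \<Longrightarrow> \<epsilon> < \<epsilon>0 \<Longrightarrow>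
      Limsup at_top (\<lambda>x. trunc_moment \<epsilon> x / ennreal (F x)) < ennreal m"
    unfolding eventually_at_right_field by auto
  show thesis
  proof (rule that[OF \<epsilon>0])
    fix \<epsilon> assume "0 < \<epsilon>" "\<epsilon> < \<epsilon>0"
    from Limsup_lessD[OF limsup[OF this]] eventually_tail_pos
    show "eventually (\<lambda>x. trunc_moment \<epsilon> x \<le> ennreal (m * F x)) at_top"
    proof eventually_elim
      case (elim x)
      then have "trunc_moment \<epsilon> x < ennreal m * ennreal (F x)"
        by (subst (asm) divide_less_ennreal) auto
      then show ?case using m elim by (simp add: ennreal_mult)
    qed
  qed
qed

lemma truncated_product_markov:
  assumes x: "x > 0" and v: "v > 0" and m: "m \<ge> 0"
    and small: "trunc_moment \<epsilon> x \<le> ennreal (m * F x)"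
  shows "measure M {\<omega> \<in> space M. X 0 \<omega> \<le> \<epsilon> * x \<and> v \<le> \<bar>X 0 \<omega> / x * (X (int h) \<omega> / B x)\<bar>}
           \<le> v powr (- \<delta>) * m * F x"
proof -
  define U where "U \<omega> = ennreal (\<bar>X 0 \<omega> / x * indicator {\<omega>. X 0 \<omega> \<le> \<epsilon> * x} \<omega>
                              * (X (int h) \<omega> / b h x)\<bar> powr \<delta>)" for \<omega>
  define E where "E = {\<omega> \<in> space M. X 0 \<omega> \<le> \<epsilon> * x \<and> v \<le> \<bar>X 0 \<omega> / x * (X (int h) \<omega> / B x)\<bar>}"
  have [measurable]: "U \<in> borel_measurable M" unfolding U_def by measurable
  have "E \<subseteq> {\<omega> \<in> space M. 1 \<le> ennreal (v powr (- \<delta>)) * U \<omega>}"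
  proof
    fix \<omega> assume \<omega>: "\<omega> \<in> E"
    have "v powr \<delta> \<le> \<bar>X 0 \<omega> / x * (X (int h) \<omega> / B x)\<bar> powr \<delta>"
      using \<omega> v delta_pos by (intro powr_mono2) (auto simp: E_def)
    then have "1 \<le> v powr (- \<delta>) * \<bar>X 0 \<omega> / x * (X (int h) \<omega> / B x)\<bar> powr \<delta>"
      using v by (simp add: powr_minus field_simps)
    then have "1 \<le> ennreal (v powr (- \<delta>) * \<bar>X 0 \<omega> / x * (X (int h) \<omega> / B x)\<bar> powr \<delta>)"
      by (simp add: ennreal_leI)
    then show "\<omega> \<in> {\<omega> \<in> space M. 1 \<le> ennreal (v powr (- \<delta>)) * U \<omega>}"
      using \<omega> by (simp add: E_def U_def ennreal_mult)
  qed
  then have "emeasure M E \<le> emeasure M {\<omega> \<in> space M. 1 \<le> ennreal (v powr (- \<delta>)) * U \<omega>}"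
    by (intro emeasure_mono) measurable
  also have "\<dots> \<le> ennreal (v powr (- \<delta>)) * (\<integral>\<^sup>+\<omega>. U \<omega> * indicator (space M) \<omega> \<partial>M)"
    by (rule nn_integral_Markov_inequality) measurable
  also have "(\<integral>\<^sup>+\<omega>. U \<omega> * indicator (space M) \<omega> \<partial>M) = trunc_moment \<epsilon> x"
    unfolding trunc_moment_def U_def by (intro nn_integral_cong) simp
  also have "ennreal (v powr (- \<delta>)) * trunc_moment \<epsilon> x \<le> ennreal (v powr (- \<delta>) * m * F x)"
    using mult_left_mono[OF small] m tail_nonneg by (simp add: ennreal_mult mult.assoc)
  finally show ?thesis
    unfolding E_def[symmetric] P.emeasure_eq_measure using m tail_nonneg
    by (subst (asm) ennreal_le_iff) auto
qed

lemma integral_window_le_exceed: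
  assumes x: "x > 0" and "e > 0" "0 \<le> lo" "lo < hi" "K \<ge> 0" "C \<ge> 0"
  shows "(\<integral>\<omega>. window e K C lo hi (ereal (X 0 \<omega> / x)) (ereal (X (int h) \<omega> / B x)) \<partial>M)
           \<le> measure M (product_exceed (x * B x * lo))"
proof (rule integral_le_measure_of_support)
  fix \<omega> assume \<omega>: "\<omega> \<in> space M"
    "window e K C lo hi (ereal (X 0 \<omega> / x)) (ereal (X (int h) \<omega> / B x)) > 0"
  have "lo < X 0 \<omega> * X (int h) \<omega> / (x * B x)"
    using window_pos_imp[OF _ _ _ _ _ \<omega>(2)] assms by auto
  then show "\<omega> \<in> product_exceed (x * B x * lo)"
    using \<omega>(1) x scaling_pos[OF x] by (simp add: product_exceed_def pos_less_divide_eq mult.commute)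
qed (use assms window_bounds P.emeasure_finite in \<open>auto simp: less_top[symmetric]\<close>)

lemma exceed_ratio_liminf:
  assumes v: "0 < v" "v < 1" and e: "e > 0"
  shows "eventually (\<lambda>x. c0 - e \<le> exceed_ratio v x) at_top"
proof -
  obtain \<epsilon> K where \<epsilon>K: "0 < \<epsilon>" "\<epsilon> < K"
    and trunc: "c0 - e/2 \<le> measure N {y \<in> S. ereal \<epsilon> \<le> y 0 \<and> y 0 \<le> ereal K}"
    using nu_exceed_truncated[of "e/2"] e by auto
  define w where "w = window \<epsilon> K (1/\<epsilon>) v 1"
  have "measure N {y \<in> S. ereal \<epsilon> \<le> y 0 \<and> y 0 \<le> ereal K} \<le> (\<integral>y. w (y 0) (y h) \<partial>N)"
  proof (rule measure_le_integral_of_one_on)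
    show "w (y 0) (y h) = 1" if "y \<in> {y \<in> S. ereal \<epsilon> \<le> y 0 \<and> y 0 \<le> ereal K}" for y
      unfolding w_def using that v \<epsilon>K
      by (intro window_eq_1) (auto simp: prod_exceed_set_def one_ereal_def)
  qed (use v \<epsilon>K integrable_window_N window_bounds emeasure_exceed_subset in \<open>auto simp: w_def\<close>)
  moreover have "((\<lambda>x. (\<integral>\<omega>. w (ereal (X 0 \<omega> / x)) (ereal (X (int h) \<omega> / B x)) \<partial>M) / F x)
      \<longlongrightarrow> (\<integral>y. w (y 0) (y h) \<partial>N)) at_top"
    unfolding w_def using \<epsilon>K by (intro vague_limit_window) auto
  ultimately have "eventually (\<lambda>x. c0 - e < (\<integral>\<omega>. w (ereal (X 0 \<omega> / x)) (ereal (X (int h) \<omega> / B x)) \<partial>M) / F x) at_top"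
    using trunc e by (elim order_tendstoD(1)) simp
  then show ?thesis
    using eventually_gt_at_top[of 0] eventually_tail_pos
  proof eventually_elim
    case (elim x)
    have "(\<integral>\<omega>. w (ereal (X 0 \<omega> / x)) (ereal (X (int h) \<omega> / B x)) \<partial>M) \<le> measure M (product_exceed (x * B x * v))"
      unfolding w_def using elim v \<epsilon>K by (intro integral_window_le_exceed) auto
    then have "(\<integral>\<omega>. w (ereal (X 0 \<omega> / x)) (ereal (X (int h) \<omega> / B x)) \<partial>M) / F x \<le> exceed_ratio v x"
      unfolding exceed_ratio_def using elim by (intro divide_right_mono) auto
    then show ?case using elim by simp
  qed
qed

lemma measure_moderate_le_integral_window:
  assumes e: "e > 0" and lo_hi: "lo < hi" "0 < hi" "hi \<le> C * e" and x: "x > 0"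
  shows "measure M {\<omega> \<in> space M. e * x \<le> X 0 \<omega> \<and> X 0 \<omega> \<le> K * x \<and> x * B x * hi < X 0 \<omega> * X (int h) \<omega>}
    \<le> (\<integral>\<omega>. window e K C lo hi (ereal (X 0 \<omega> / x)) (ereal (X (int h) \<omega> / B x)) \<partial>M)"
proof (rule measure_le_integral_of_one_on)
  have Bx: "B x > 0" using scaling_pos[OF x] .
  have C: "C \<ge> 0" using lo_hi e by (metis less_le_trans less_imp_le zero_less_mult_pos2)
  show "integrable M (\<lambda>\<omega>. window e K C lo hi (ereal (X 0 \<omega> / x)) (ereal (X (int h) \<omega> / B x)))"
    using e lo_hi window_bounds by (intro P.integrable_const_bound[where B=1]) auto
  fix \<omega> assume \<omega>: "\<omega> \<in> {\<omega> \<in> space M. e * x \<le> X 0 \<omega> \<and> X 0 \<omega> \<le> K * x \<and> x * B x * hi < X 0 \<omega> * X (int h) \<omega>}"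
  then have X0: "e * x \<le> X 0 \<omega>" "X 0 \<omega> \<le> K * x"
    and above: "hi < X 0 \<omega> / x * (X (int h) \<omega> / B x)"
    using x Bx by (auto simp: pos_less_divide_eq mult.commute)
  have "0 < e * x" using e x by simp
  then have "0 < X 0 \<omega> / x" using X0 x by simp
  moreover have "0 < X 0 \<omega> / x * (X (int h) \<omega> / B x)" using above lo_hi by linarith
  ultimately have "0 < X (int h) \<omega> / B x" using zero_less_mult_pos by blast
  then have "0 < X (int h) \<omega>" using Bx by (simp add: zero_less_divide_iff)
  then show "window e K C lo hi (ereal (X 0 \<omega> / x)) (ereal (X (int h) \<omega> / B x)) = 1"
    using X0 above e lo_hi C x Bx
    by (intro window_eq_1) (auto simp: pos_le_divide_eq pos_divide_le_eq)
qed (use e lo_hi window_bounds P.emeasure_finite in \<open>auto simp: less_top[symmetric]\<close>)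

lemma product_exceed_split:
  assumes \<epsilon>K: "0 < \<epsilon>" "\<epsilon> < K" and v: "1 < v" and x: "x > 0" and m: "m \<ge> 0"
    and small: "trunc_moment \<epsilon> x \<le> ennreal (m * F x)"
  shows "measure M (product_exceed (x * B x * v))
    \<le> (\<integral>\<omega>. window \<epsilon> K (v/\<epsilon>) 1 v (ereal (X 0 \<omega> / x)) (ereal (X (int h) \<omega> / B x)) \<partial>M)
       + F (K * x) + v powr (- \<delta>) * m * F x"
proof -
  have Bx: "B x > 0" using scaling_pos[OF x] .
  define E1 where "E1 = {\<omega> \<in> space M. \<epsilon> * x \<le> X 0 \<omega> \<and> X 0 \<omega> \<le> K * x \<and> x * B x * v < X 0 \<omega> * X (int h) \<omega>}"
  define E2 where "E2 = {\<omega> \<in> space M. K * x < X 0 \<omega>}"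
  define E3 where "E3 = {\<omega> \<in> space M. X 0 \<omega> \<le> \<epsilon> * x \<and> v \<le> \<bar>X 0 \<omega> / x * (X (int h) \<omega> / B x)\<bar>}"
  have [measurable]: "E1 \<in> sets M" "E2 \<in> sets M" "E3 \<in> sets M"
    unfolding E1_def E2_def E3_def by measurable
  have "product_exceed (x * B x * v) \<subseteq> E1 \<union> E2 \<union> E3"
  proof
    fix \<omega> assume "\<omega> \<in> product_exceed (x * B x * v)"
    then have \<omega>: "\<omega> \<in> space M" "x * B x * v < X 0 \<omega> * X (int h) \<omega>"
      by (auto simp: product_exceed_def)
    then have "v < X 0 \<omega> * X (int h) \<omega> / (x * B x)"
      using x Bx by (simp add: pos_less_divide_eq mult.commute)
    also have "\<dots> = X 0 \<omega> / x * (X (int h) \<omega> / B x)" by simp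
    finally have "v \<le> \<bar>X 0 \<omega> / x * (X (int h) \<omega> / B x)\<bar>" by linarith
    then show "\<omega> \<in> E1 \<union> E2 \<union> E3"
      using \<omega> by (auto simp: E1_def E2_def E3_def)
  qed
  then have "measure M (product_exceed (x * B x * v)) \<le> measure M (E1 \<union> E2 \<union> E3)"
    by (intro P.finite_measure_mono) auto
  also have "\<dots> \<le> measure M E1 + measure M E2 + measure M E3"
    using measure_Un_le[of "E1 \<union> E2" M E3] measure_Un_le[of E1 M E2] by simp
  also have "measure M E1
      \<le> (\<integral>\<omega>. window \<epsilon> K (v/\<epsilon>) 1 v (ereal (X 0 \<omega> / x)) (ereal (X (int h) \<omega> / B x)) \<partial>M)"
    unfolding E1_def using \<epsilon>K v x by (intro measure_moderate_le_integral_window) auto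
  also have "measure M E2 = F (K * x)" by (simp add: E2_def tailprob_def)
  also have "measure M E3 \<le> v powr (- \<delta>) * m * F x"
    unfolding E3_def using x v m small by (intro truncated_product_markov) auto
  finally show ?thesis by simp
qed

lemma integral_window_le_exceed_mass:
  assumes "e > 0" "1 \<le> lo" "lo < hi" "K \<ge> 0" "C \<ge> 0"
  shows "(\<integral>y. window e K C lo hi (y 0) (y h) \<partial>N) \<le> c0"
proof (rule integral_le_measure_of_support)
  fix y assume y: "y \<in> space N" "0 < window e K C lo hi (y 0) (y h)"
  then have y0: "ereal (e/2) < y 0" and "0 < y h" and lo: "ereal lo < y 0 * y h"
    using window_pos_imp[OF _ _ _ _ _ y(2)] assms by auto
  have "0 < y 0" using y0 assms by (cases "y 0") auto
  moreover have "1 < y 0 * y h"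
    using order.strict_trans1[of 1 "ereal lo"] lo assms(2) by simp
  ultimately show "y \<in> S"
    using y \<open>0 < y h\<close> by (auto simp: prod_exceed_set_def)
qed (use assms window_bounds exceed_finite in auto)

lemma exceed_ratio_limsup:
  assumes v: "1 < v" and e: "e > 0"
  shows "eventually (\<lambda>x. exceed_ratio v x \<le> c0 + e) at_top"
proof -
  define m where "m = e / 3 * v powr \<delta>"
  have m: "m > 0" "v powr (- \<delta>) * m = e / 3"
    using v e by (auto simp: m_def powr_minus field_simps)
  obtain \<epsilon>0 where "\<epsilon>0 > 0" and small: "\<And>\<epsilon>. 0 < \<epsilon> \<Longrightarrow> \<epsilon> < \<epsilon>0 \<Longrightarrow>
      eventually (\<lambda>x. trunc_moment \<epsilon> x \<le> ennreal (m * F x)) at_top"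
    using trunc_moment_small[OF m(1)] by blast
  define \<epsilon> where "\<epsilon> = \<epsilon>0 / 2"
  have \<epsilon>: "0 < \<epsilon>" "\<epsilon> < \<epsilon>0" using \<open>\<epsilon>0 > 0\<close> by (auto simp: \<epsilon>_def)
  have "((\<lambda>K. K powr (- \<alpha>)) \<longlongrightarrow> 0) at_top"
    using alpha_pos by (intro tendsto_neg_powr filterlim_ident) auto
  then have "eventually (\<lambda>K. K powr (- \<alpha>) < e/3 \<and> \<epsilon> < K) at_top"
    using e by (intro eventually_conj order_tendstoD(2) eventually_gt_at_top) auto
  then obtain K where K: "K powr (- \<alpha>) < e/3" "\<epsilon> < K"
    by (auto simp: eventually_at_top_linorder)
  define w where "w = window \<epsilon> K (v/\<epsilon>) 1 v"
  have "(\<integral>y. w (y 0) (y h) \<partial>N) \<le> c0"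
    unfolding w_def using \<epsilon> v K by (intro integral_window_le_exceed_mass) auto
  moreover have "((\<lambda>x. (\<integral>\<omega>. w (ereal (X 0 \<omega> / x)) (ereal (X (int h) \<omega> / B x)) \<partial>M) / F x
        + F (K * x) / F x + e/3) \<longlongrightarrow> (\<integral>y. w (y 0) (y h) \<partial>N) + K powr (- \<alpha>) + e/3) at_top"
    unfolding w_def using \<epsilon> K v
    by (intro tendsto_add vague_limit_window tail_ratio tendsto_const) auto
  ultimately have "eventually (\<lambda>x. (\<integral>\<omega>. w (ereal (X 0 \<omega> / x)) (ereal (X (int h) \<omega> / B x)) \<partial>M) / F x
        + F (K * x) / F x + e/3 < c0 + e) at_top"
    using K(1) by (elim order_tendstoD(2)) (use e in linarith)
  then show ?thesis
    using small[OF \<epsilon>] eventually_tail_pos eventually_gt_at_top[of 0]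
  proof eventually_elim
    case (elim x)
    have "measure M (product_exceed (x * B x * v))
        \<le> (\<integral>\<omega>. w (ereal (X 0 \<omega> / x)) (ereal (X (int h) \<omega> / B x)) \<partial>M) + F (K * x) + e/3 * F x"
      using product_exceed_split[OF \<epsilon>(1) _ v _ _ elim(2)] \<epsilon> K elim m by (simp add: w_def)
    then have "exceed_ratio v x \<le> ((\<integral>\<omega>. w (ereal (X 0 \<omega> / x)) (ereal (X (int h) \<omega> / B x)) \<partial>M)
        + F (K * x) + e/3 * F x) / F x"
      unfolding exceed_ratio_def using elim by (intro divide_right_mono) auto
    also have "\<dots> = (\<integral>\<omega>. w (ereal (X 0 \<omega> / x)) (ereal (X (int h) \<omega> / B x)) \<partial>M) / F x
        + F (K * x) / F x + e/3"
      using elim by (simp add: add_divide_distrib)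
    finally show ?case using elim(1) by simp
  qed
qed

lemma scaled_threshold_tendsto:
  assumes t: "t > 0"
  shows "((\<lambda>x. t * (B (t * x) / B x) * u) \<longlongrightarrow> t powr p * u) at_top"
proof -
  have "((\<lambda>x. t * (B (t * x) / B x) * u) \<longlongrightarrow> t * t powr \<kappa> h * u) at_top"
    by (intro tendsto_intros scaling_ratio t)
  moreover have "t * t powr \<kappa> h = t powr p" using t by (simp add: powr_add)
  ultimately show ?thesis by simp
qed

lemma rescaled_threshold: "x > 0 \<Longrightarrow> t * x * B (t * x) * u = x * B x * (t * (B (t * x) / B x) * u)"
  using scaling_pos[of x] by (simp add: field_simps)

lemma exceed_ratio_rescale_lower:
  assumes x: "x > 0" and "F x > 0" "t * (B (t * x) / B x) * u \<le> v"
  shows "exceed_ratio v x * (F x / F (t * x)) \<le> exceed_ratio u (t * x)"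
proof -
  have "t * x * B (t * x) * u \<le> x * B x * v"
    unfolding rescaled_threshold[OF x] using assms(3) x scaling_pos[OF x] by (intro mult_left_mono) auto
  then have "product_exceed (x * B x * v) \<subseteq> product_exceed (t * x * B (t * x) * u)"
    by (rule product_exceed_antimono)
  then have "measure M (product_exceed (x * B x * v)) \<le> measure M (product_exceed (t * x * B (t * x) * u))"
    by (intro P.finite_measure_mono) auto
  then show ?thesis using assms unfolding exceed_ratio_def by (simp add: divide_right_mono tail_nonneg)
qed

lemma exceed_ratio_rescale_upper:
  assumes x: "x > 0" and "F x > 0" "v \<le> t * (B (t * x) / B x) * u"
  shows "exceed_ratio u (t * x) \<le> exceed_ratio v x * (F x / F (t * x))"
proof -
  have "x * B x * v \<le> t * x * B (t * x) * u"
    unfolding rescaled_threshold[OF x] using assms(3) x scaling_pos[OF x] by (intro mult_left_mono) auto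
  then have "product_exceed (t * x * B (t * x) * u) \<subseteq> product_exceed (x * B x * v)"
    by (rule product_exceed_antimono)
  then have "measure M (product_exceed (t * x * B (t * x) * u)) \<le> measure M (product_exceed (x * B x * v))"
    by (intro P.finite_measure_mono) auto
  then show ?thesis using assms unfolding exceed_ratio_def by (simp add: divide_right_mono tail_nonneg)
qed

lemma exceed_ratio_lower:
  assumes t: "t > 0" and u: "u > 0" and below: "t powr p * u < 1" and e: "e > 0"
  shows "eventually (\<lambda>x. c0 * t powr \<alpha> - e \<le> exceed_ratio u x) at_top"
proof -
  obtain v where v: "t powr p * u < v" "v < 1" using dense[OF below] by blast
  have "0 < t powr p * u" using t u by simp
  with v have "0 < v" by linarith
  have "eventually (\<lambda>x. c0 * t powr \<alpha> - e \<le> exceed_ratio v x * (F x / F (t * x))) at_top"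
    using v \<open>0 < v\<close> e t by (intro eventually_lower_bound_mult exceed_ratio_liminf tail_ratio_inverse)
                   (auto simp: tail_nonneg)
  moreover have "eventually (\<lambda>x. t * (B (t * x) / B x) * u < v) at_top"
    by (rule order_tendstoD(2)[OF scaled_threshold_tendsto[OF t] v(1)])
  ultimately have "eventually (\<lambda>x. c0 * t powr \<alpha> - e \<le> exceed_ratio u (t * x)) at_top"
    using eventually_tail_pos eventually_gt_at_top[of 0]
  proof eventually_elim
    case (elim x)
    with exceed_ratio_rescale_lower[OF elim(4,3) less_imp_le[OF elim(2)]] show ?case by linarith
  qed
  then show ?thesis using eventually_at_top_scale_iff[OF t] by blast
qed

lemma exceed_ratio_upper:
  assumes t: "t > 0" and u: "u > 0" and above: "1 < t powr p * u" and e: "e > 0"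
  shows "eventually (\<lambda>x. exceed_ratio u x \<le> c0 * t powr \<alpha> + e) at_top"
proof -
  obtain v where v: "1 < v" "v < t powr p * u" using dense[OF above] by blast
  have "eventually (\<lambda>x. exceed_ratio v x * (F x / F (t * x)) \<le> c0 * t powr \<alpha> + e) at_top"
    using v e t by (intro eventually_upper_bound_mult exceed_ratio_limsup tail_ratio_inverse)
                   (auto simp: tail_nonneg)
  moreover have "eventually (\<lambda>x. v < t * (B (t * x) / B x) * u) at_top"
    by (rule order_tendstoD(1)[OF scaled_threshold_tendsto[OF t] v(2)])
  ultimately have "eventually (\<lambda>x. exceed_ratio u (t * x) \<le> c0 * t powr \<alpha> + e) at_top"
    using eventually_tail_pos eventually_gt_at_top[of 0]
  proof eventually_elim
    case (elim x)
    with exceed_ratio_rescale_upper[OF elim(4,3) less_imp_le[OF elim(2)]] show ?case by linarith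
  qed
  then show ?thesis using eventually_at_top_scale_iff[OF t] by blast
qed

lemma exceed_ratio_tendsto:
  assumes p: "p > 0" and u: "u > 0"
  shows "((\<lambda>x. exceed_ratio u x) \<longlongrightarrow> u powr (- \<alpha> / p) * c0) at_top"
proof -
  define t0 where "t0 = u powr (- 1 / p)"
  have "t0 powr p = u powr (- 1 / p * p)" unfolding t0_def by (rule powr_powr)
  then have t0: "t0 > 0" "t0 powr p * u = 1"
    using u p by (simp_all add: t0_def powr_minus)
  have "t0 powr \<alpha> = u powr (- 1 / p * \<alpha>)" unfolding t0_def by (rule powr_powr)
  then have t0_alpha: "t0 powr \<alpha> = u powr (- \<alpha> / p)" by simp
  have "((\<lambda>x. exceed_ratio u x) \<longlongrightarrow> c0 * t0 powr \<alpha>) at_top"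
  proof (rule tendsto_of_bracketing[where g="\<lambda>t. c0 * t powr \<alpha>" and a=0])
    show "isCont (\<lambda>t. c0 * t powr \<alpha>) t0" using t0 by (intro continuous_intros) auto
    fix t e :: real assume "e > 0"
    show "eventually (\<lambda>x. c0 * t powr \<alpha> - e \<le> exceed_ratio u x) at_top" if "0 < t" "t < t0"
    proof (rule exceed_ratio_lower[OF that(1) u _ \<open>e > 0\<close>])
      have "t powr p < t0 powr p" using that p by (intro powr_less_mono2) auto
      from mult_strict_right_mono[OF this u] show "t powr p * u < 1" using t0(2) by simp
    qed
    show "eventually (\<lambda>x. exceed_ratio u x \<le> c0 * t powr \<alpha> + e) at_top" if "t0 < t"
    proof (rule exceed_ratio_upper[OF _ u _ \<open>e > 0\<close>])
      show "t > 0" using that t0 by simp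
      have "t0 powr p < t powr p" using that t0 p by (intro powr_less_mono2) auto
      from mult_strict_right_mono[OF this u] show "1 < t powr p * u" using t0(2) by simp
    qed
  qed (use t0 in auto)
  then show ?thesis using t0_alpha by (simp add: mult.commute)
qed

definition product_moment_below :: "real \<Rightarrow> ennreal" where
  "product_moment_below c =
     (\<integral>\<^sup>+\<omega>. ennreal (\<bar>X 0 \<omega> * X (int h) \<omega>\<bar> powr \<delta> * indicator {\<omega>. X 0 \<omega> \<le> c} \<omega>) \<partial>M)"

definition moment_scale :: "real \<Rightarrow> real" where
  "moment_scale x = (x * B x) powr \<delta> * F x"

lemma product_moment_below_mono: "c \<le> c' \<Longrightarrow> product_moment_below c \<le> product_moment_below c'"
  unfolding product_moment_below_def
  by (intro nn_integral_mono) (auto simp: indicator_def intro!: ennreal_leI)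

lemma product_moment_below_eq:
  assumes x: "x > 0"
  shows "product_moment_below (\<epsilon> * x) = ennreal ((x * B x) powr \<delta>) * trunc_moment \<epsilon> x"
proof -
  have Bx: "B x > 0" using scaling_pos[OF x] .
  have "ennreal (\<bar>X 0 \<omega> * X (int h) \<omega>\<bar> powr \<delta> * indicator {\<omega>. X 0 \<omega> \<le> \<epsilon> * x} \<omega>)
      = ennreal ((x * B x) powr \<delta>) * ennreal (\<bar>X 0 \<omega> / x * indicator {\<omega>. X 0 \<omega> \<le> \<epsilon> * x} \<omega>
                                                   * (X (int h) \<omega> / b h x)\<bar> powr \<delta>)" for \<omega>
  proof -
    have "\<bar>X 0 \<omega> * X (int h) \<omega>\<bar> powr \<delta> = (x * B x) powr \<delta> * \<bar>X 0 \<omega> / x * (X (int h) \<omega> / B x)\<bar> powr \<delta>"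
      using x Bx by (simp add: abs_mult abs_divide powr_divide powr_mult abs_of_pos)
    then show ?thesis
      by (simp add: indicator_def ennreal_mult[symmetric])
  qed
  then show ?thesis
    unfolding product_moment_below_def trunc_moment_def by (simp add: nn_integral_cmult)
qed

lemma moment_scale_doubling:
  "((\<lambda>x. moment_scale (2 * x) / moment_scale x) \<longlongrightarrow> 2 powr (\<delta> * p - \<alpha>)) at_top"
proof -
  have "((\<lambda>x. (2 * (B (2 * x) / B x)) powr \<delta> * (F (2 * x) / F x))
      \<longlongrightarrow> (2 * 2 powr \<kappa> h) powr \<delta> * 2 powr (- \<alpha>)) at_top"
    by (intro tendsto_mult tendsto_powr tendsto_const scaling_ratio tail_ratio) auto
  moreover have "(2 * 2 powr \<kappa> h) powr \<delta> * 2 powr (- \<alpha>) = 2 powr (\<delta> * p - \<alpha>)"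
  proof -
    have "(2::real) * 2 powr \<kappa> h = 2 powr p" by (simp add: powr_add)
    then show ?thesis by (simp add: powr_powr powr_add[symmetric] mult.commute)
  qed
  moreover have "eventually (\<lambda>x. (2 * (B (2 * x) / B x)) powr \<delta> * (F (2 * x) / F x)
                                 = moment_scale (2 * x) / moment_scale x) at_top"
    using eventually_tail_pos eventually_gt_at_top[of 0]
  proof eventually_elim
    case (elim x)
    have "B x > 0" "B (2 * x) > 0" using scaling_pos elim by auto
    then have "(2 * x * B (2 * x)) powr \<delta> = (2 * (B (2 * x) / B x)) powr \<delta> * (x * B x) powr \<delta>"
      using elim by (simp add: powr_mult[symmetric] mult_ac)
    then show ?case using \<open>B x > 0\<close> elim by (simp add: moment_scale_def field_simps)
  qed
  ultimately show ?thesis by (simp add: tendsto_cong)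
qed

text \<open>When \<open>1 + \<kappa>\<^sub>h \<le> 0\<close> the quantity \<open>(x b\<^sub>h(x))\<^sup>\<delta> P(X\<^sub>0 > x)\<close> decays geometrically along
  \<open>x = 2\<^sup>n x\<^sub>0\<close>, while by the moment condition it dominates the nondecreasing truncated moment
  of \<open>X\<^sub>0 X\<^sub>h\<close>; so that moment vanishes identically.\<close>

lemma product_moment_below_geometric:
  assumes p: "p \<le> 0"
  obtains c q C where "c > 0" "0 \<le> q" "q < 1"
    "\<And>n::nat. product_moment_below (2 ^ n * c) \<le> ennreal (q ^ n * C)"
proof -
  obtain \<epsilon>0 where "\<epsilon>0 > 0" and small: "\<And>\<epsilon>. 0 < \<epsilon> \<Longrightarrow> \<epsilon> < \<epsilon>0 \<Longrightarrow>
      eventually (\<lambda>x. trunc_moment \<epsilon> x \<le> ennreal (1 * F x)) at_top"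
    using trunc_moment_small[of 1] by auto
  define \<epsilon> where "\<epsilon> = \<epsilon>0 / 2"
  have \<epsilon>: "0 < \<epsilon>" "\<epsilon> < \<epsilon>0" using \<open>\<epsilon>0 > 0\<close> by (auto simp: \<epsilon>_def)
  define q where "q = (2 powr (\<delta> * p - \<alpha>) + 1) / 2"
  have "\<delta> * p \<le> 0" using p delta_pos by (simp add: mult_nonneg_nonpos)
  then have "2 powr (\<delta> * p - \<alpha>) < (1::real)" using alpha_pos by (intro powr_less_one) auto
  then have q: "2 powr (\<delta> * p - \<alpha>) < q" "q < 1" "0 \<le> q"
    by (auto simp: q_def add_nonneg_nonneg)
  have "eventually (\<lambda>x. moment_scale (2 * x) / moment_scale x < q \<and> 0 < x \<and> 0 < F x
                        \<and> trunc_moment \<epsilon> x \<le> ennreal (F x)) at_top"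
    using order_tendstoD(2)[OF moment_scale_doubling q(1)] eventually_gt_at_top[of 0]
          eventually_tail_pos small[OF \<epsilon>] by eventually_elim auto
  then obtain x0 where x0: "\<And>x. x \<ge> x0 \<Longrightarrow> moment_scale (2 * x) / moment_scale x < q \<and> 0 < x
                              \<and> 0 < F x \<and> trunc_moment \<epsilon> x \<le> ennreal (F x)"
    by (auto simp: eventually_at_top_linorder)
  have x0_pos: "x0 > 0" using x0[of x0] by simp
  have scale_pos: "moment_scale x > 0" if "x \<ge> x0" for x
    using x0[OF that] scaling_pos[of x] by (simp add: moment_scale_def)
  have below_scale: "product_moment_below (\<epsilon> * x) \<le> ennreal (moment_scale x)" if "x \<ge> x0" for x
    using x0[OF that] scaling_pos[of x]
    by (simp add: product_moment_below_eq moment_scale_def ennreal_mult mult_left_mono)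
  have geometric: "moment_scale (2 ^ n * x0) \<le> q ^ n * moment_scale x0" for n
    by (rule power_bound_of_doubling[OF x0_pos q(3)])
       (use x0 scale_pos in \<open>simp add: divide_less_eq less_imp_le\<close>)
  show thesis
  proof (rule that[of "\<epsilon> * x0" q "moment_scale x0"])
    fix n :: nat
    have "product_moment_below (2 ^ n * (\<epsilon> * x0)) \<le> ennreal (moment_scale (2 ^ n * x0))"
      using below_scale[of "2 ^ n * x0"] x0_pos by (simp add: mult_le_cancel_right1 mult_ac)
    also have "\<dots> \<le> ennreal (q ^ n * moment_scale x0)"
      using geometric by (intro ennreal_leI)
    finally show "product_moment_below (2 ^ n * (\<epsilon> * x0)) \<le> ennreal (q ^ n * moment_scale x0)" .
  qed (use \<epsilon> x0_pos q in auto)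
qed

lemma product_moment_below_vanishes:
  assumes "p \<le> 0"
  obtains c where "c > 0" "\<And>n::nat. product_moment_below (2 ^ n * c) = 0"
proof -
  obtain c q C where c: "c > 0" and q: "0 \<le> q" "q < 1"
    and bound: "\<And>n::nat. product_moment_below (2 ^ n * c) \<le> ennreal (q ^ n * C)"
    using product_moment_below_geometric[OF assms] by blast
  show thesis
  proof (rule that[OF c])
    fix N :: nat
    have "(\<lambda>n. ennreal (q ^ n * C)) \<longlonglongrightarrow> ennreal (0 * C)"
      using q by (intro tendsto_ennrealI tendsto_mult LIMSEQ_realpow_zero tendsto_const) auto
    moreover have "product_moment_below (2 ^ N * c) \<le> ennreal (q ^ n * C)" if "n \<ge> N" for n
    proof -
      have "product_moment_below (2 ^ N * c) \<le> product_moment_below (2 ^ n * c)"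
        using that c by (intro product_moment_below_mono) (simp add: power_increasing)
      also have "\<dots> \<le> ennreal (q ^ n * C)" by (rule bound)
      finally show ?thesis .
    qed
    ultimately have "product_moment_below (2 ^ N * c) \<le> ennreal (0 * C)"
      by (intro LIMSEQ_le_const) auto
    then show "product_moment_below (2 ^ N * c) = 0" by simp
  qed
qed

lemma product_AE_zero_degenerate:
  assumes "p \<le> 0"
  shows "AE \<omega> in M. X 0 \<omega> * X (int h) \<omega> = 0"
proof -
  obtain c where c: "c > 0" and zero: "\<And>n::nat. product_moment_below (2 ^ n * c) = 0"
    using product_moment_below_vanishes[OF assms] by blast
  have "AE \<omega> in M. X 0 \<omega> \<le> 2 ^ n * c \<longrightarrow> X 0 \<omega> * X (int h) \<omega> = 0" for n :: nat
  proof -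
    have "AE \<omega> in M. ennreal (\<bar>X 0 \<omega> * X (int h) \<omega>\<bar> powr \<delta> * indicator {\<omega>. X 0 \<omega> \<le> 2 ^ n * c} \<omega>) = 0"
      using zero[of n] unfolding product_moment_below_def by (subst (asm) nn_integral_0_iff_AE) auto
    then show ?thesis by eventually_elim (auto simp: indicator_def ennreal_eq_0_iff)
  qed
  then have "AE \<omega> in M. \<forall>n::nat. X 0 \<omega> \<le> 2 ^ n * c \<longrightarrow> X 0 \<omega> * X (int h) \<omega> = 0"
    by (subst AE_all_countable) auto
  then show ?thesis
  proof eventually_elim
    case (elim \<omega>)
    obtain n :: nat where "X 0 \<omega> / c < 2 ^ n"
      using real_arch_pow[of 2 "X 0 \<omega> / c"] by auto
    then have "X 0 \<omega> \<le> 2 ^ n * c" using c by (simp add: divide_less_eq)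
    then show ?case using elim by blast
  qed
qed

lemma exceed_ratio_degenerate:
  assumes "p \<le> 0" "u > 0"
  shows "eventually (\<lambda>x. exceed_ratio u x = 0) at_top"
  using eventually_gt_at_top[of 0]
proof eventually_elim
  case (elim x)
  have "x * B x * u > 0" using elim scaling_pos[OF elim] assms by simp
  have "AE \<omega> in M. \<omega> \<notin> product_exceed (x * B x * u)"
    using product_AE_zero_degenerate[OF assms(1)]
    by eventually_elim (use \<open>x * B x * u > 0\<close> in \<open>auto simp: product_exceed_def\<close>)
  then have "emeasure M (product_exceed (x * B x * u)) = 0"
    by (subst (asm) AE_iff_measurable[OF product_exceed_sets]) (auto simp: product_exceed_def)
  then show ?case by (simp add: exceed_ratio_def P.emeasure_eq_measure)
qed

lemma exceed_mass_degenerate: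
  assumes "p \<le> 0"
  shows "c0 = 0"
proof (rule ccontr)
  assume "c0 \<noteq> 0"
  then have "c0 > 0" by (simp add: order_le_neq_trans)
  then have "eventually (\<lambda>x. c0 - c0/2 \<le> exceed_ratio (1/2) x \<and> exceed_ratio (1/2) x = 0) at_top"
    using assms by (intro eventually_conj exceed_ratio_liminf exceed_ratio_degenerate) auto
  then obtain x where "c0 - c0/2 \<le> exceed_ratio (1/2) x" "exceed_ratio (1/2) x = 0"
    by (auto simp: eventually_at_top_linorder)
  with \<open>c0 > 0\<close> show False by simp
qed

end

theorem proposition2:
  fixes M :: "'a measure" and X :: "int \<Rightarrow> 'a \<Rightarrow> real"
    and b :: "nat \<Rightarrow> real \<Rightarrow> real" and \<nu> :: "nat \<Rightarrow> (nat \<Rightarrow> ereal) measure"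
    and \<alpha> :: real and \<kappa> :: "nat \<Rightarrow> real" and h :: nat
  assumes "prob_space M"
    and "\<forall>t. X t \<in> borel_measurable M"
    and "CEV M X b \<nu>"
    and "\<alpha> > 0"
    and "regularly_varying (tailprob M X) (- \<alpha>)"
    and "\<forall>j\<ge>1. regularly_varying (b j) (\<kappa> j)"
    and "h \<ge> 1"
    and "emeasure (\<nu> h) (prod_exceed_set h (\<nu> h)) < \<infinity>"
    and "\<exists>\<delta>>0. ((\<lambda>\<epsilon>. Limsup at_top (\<lambda>x.
            (\<integral>\<^sup>+\<omega>. ennreal (\<bar>X 0 \<omega> / x * indicator {\<omega>. X 0 \<omega> \<le> \<epsilon> * x} \<omega>
                              * (X (int h) \<omega> / b h x)\<bar> powr \<delta>) \<partial>M)
            / ennreal (tailprob M X x))) \<longlongrightarrow> 0) (at_right 0)"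
  shows "\<forall>u>0. ((\<lambda>x. measure M {\<omega> \<in> space M. X 0 \<omega> * X (int h) \<omega> > x * b h x * u}
                   / tailprob M X x)
           \<longlongrightarrow> u powr (- \<alpha> / (1 + \<kappa> h)) * measure (\<nu> h) (prod_exceed_set h (\<nu> h))) at_top"
proof (intro allI impI)
  fix u :: real assume u: "u > 0"
  obtain \<delta> where "cev_lag M X b \<nu> \<alpha> \<kappa> h \<delta>"
    using assms by (auto simp: cev_lag_def)
  then interpret cev_lag M X b \<nu> \<alpha> \<kappa> h \<delta> .
  have "((\<lambda>x. exceed_ratio u x) \<longlongrightarrow> u powr (- \<alpha> / p) * c0) at_top"
  proof (cases "p > 0")
    case True
    then show ?thesis using exceed_ratio_tendsto u by blast
  next
    case False
    then show ?thesis
      using tendsto_eventually[OF exceed_ratio_degenerate] exceed_mass_degenerate u by simp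
  qed
  then show "((\<lambda>x. measure M {\<omega> \<in> space M. X 0 \<omega> * X (int h) \<omega> > x * b h x * u} / tailprob M X x)
      \<longlongrightarrow> u powr (- \<alpha> / (1 + \<kappa> h)) * measure (\<nu> h) (prod_exceed_set h (\<nu> h))) at_top"
    by (simp add: exceed_ratio_def product_exceed_def)
qed

end
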